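(* Let $X=\mathbb{CP}^2\#n\overline{\mathbb{CP}}^2$, $k$ a positive integer and $U_5=\{A\in H_2(X;\mathbb{Z}):\mathrm{ind}(A)\ge2k,\ A\cdot H>0\}$, equipped with the preorder $\ge$ defined below. Then every chain $A_1\ge A_2\ge\cdots$ in $U_5$ stabilizes, i.e. there is $N$ with $A_i=A_N$ for all $i\ge N$.
   Context: $K_0=-3H+E_1+\cdots+E_n$, $\mathrm{ind}(A):=A^2-K_0\cdot A$. Identify $H^2(X;\mathbb{R})$ with $\mathbb{R}^{n+1}$ by $(x_0,\dots,x_n)\leftrightarrow x_0PD(H)-\sum x_iPD(E_i)$. The reduced cone $\mathcal{P}$ is: $0<x_1<x_0$ if $n=1$; $0<x_2\le x_1$, $x_1+x_2<x_0$ if $n=2$; $0<x_n\le\cdots\le x_1$, $x_1+x_2+x_3\le x_0$, $\sum x_i^2<x_0^2$ if $n\ge3$. The $c_1$-nef cone is $\mathcal{P}^{c_1>0}=\{[\omega]\in\mathcal{P}:\omega(3H-E_1-\cdots-E_n)>0\}$. For $A,B\in U_5$, $A\ge B$ means $\omega(A)\ge\omega(B)$ for all $[\omega]\in\mathcal{P}^{c_1>0}$. *)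

theory Defs
  imports Complex_Main
begin

text \<open>A class A in H_2(X;Z) is encoded by its coefficients
  A = (A 0) H + (A 1) E_1 + ... + (A n) E_n, as a function nat => int vanishing beyond n.
  Intersection form: H.H = 1, E_i.E_i = -1, H.E_i = 0.\<close>

definition is_class :: "nat \<Rightarrow> (nat \<Rightarrow> int) \<Rightarrow> bool" where
  "is_class n A \<longleftrightarrow> (\<forall>i>n. A i = 0)"

definition self_int :: "nat \<Rightarrow> (nat \<Rightarrow> int) \<Rightarrow> int" where
  "self_int n A = (A 0)^2 - (\<Sum>i=1..n. (A i)^2)"

text \<open>K_0 = -3H + E_1 + ... + E_n, so K_0.A = -3 (A 0) - sum (A i).\<close>
definition K0_dot :: "nat \<Rightarrow> (nat \<Rightarrow> int) \<Rightarrow> int" where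
  "K0_dot n A = -3 * A 0 - (\<Sum>i=1..n. A i)"

definition ind :: "nat \<Rightarrow> (nat \<Rightarrow> int) \<Rightarrow> int" where
  "ind n A = self_int n A - K0_dot n A"

definition dot_H :: "(nat \<Rightarrow> int) \<Rightarrow> int" where
  "dot_H A = A 0"

text \<open>A cohomology class [omega] = x_0 PD(H) - sum x_i PD(E_i), coordinates x :: nat => real.
  Its pairing with A = a_0 H + sum a_i E_i is x_0 a_0 + sum x_i a_i.\<close>
definition omega_eval :: "nat \<Rightarrow> (nat \<Rightarrow> real) \<Rightarrow> (nat \<Rightarrow> int) \<Rightarrow> real" where
  "omega_eval n x A = x 0 * of_int (A 0) + (\<Sum>i=1..n. x i * of_int (A i))"

definition reduced_cone :: "nat \<Rightarrow> (nat \<Rightarrow> real) \<Rightarrow> bool" where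
  "reduced_cone n x \<longleftrightarrow>
     (if n = 1 then 0 < x 1 \<and> x 1 < x 0
      else if n = 2 then 0 < x 2 \<and> x 2 \<le> x 1 \<and> x 1 + x 2 < x 0
      else 3 \<le> n \<and> 0 < x n \<and> (\<forall>i\<in>{1..<n}. x (Suc i) \<le> x i) \<and>
           x 1 + x 2 + x 3 \<le> x 0 \<and> (\<Sum>i=1..n. (x i)^2) < (x 0)^2)"

text \<open>c_1-nef cone: omega(3H - E_1 - ... - E_n) > 0, i.e. 3 x_0 - sum x_i > 0.\<close>
definition c1_nef_cone :: "nat \<Rightarrow> (nat \<Rightarrow> real) \<Rightarrow> bool" where
  "c1_nef_cone n x \<longleftrightarrow> reduced_cone n x \<and> 3 * x 0 - (\<Sum>i=1..n. x i) > 0"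

definition class_ge :: "nat \<Rightarrow> (nat \<Rightarrow> int) \<Rightarrow> (nat \<Rightarrow> int) \<Rightarrow> bool" where
  "class_ge n A B \<longleftrightarrow> (\<forall>x. c1_nef_cone n x \<longrightarrow> omega_eval n x A \<ge> omega_eval n x B)"

definition U5 :: "nat \<Rightarrow> nat \<Rightarrow> (nat \<Rightarrow> int) set" where
  "U5 n k = {A. is_class n A \<and> ind n A \<ge> 2 * int k \<and> dot_H A > 0}"

end

theory Submission
  imports Defs
begin

text \<open>Pairing a class with an integral cohomology class [omega] in the c_1-nef cone gives
  integers that are nonincreasing along the chain. They are also bounded below: a class of
  nonnegative index (the bound 2k on the index is not needed) with A.H > 0 has every coefficient A.E_i at least -(A.H + 1). Finally, n + 2 integral classes in the cone suffice to recover
  a class, since suitable differences of them are PD(H) and the PD(E_j).\<close>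

definition pairing :: "nat \<Rightarrow> (nat \<Rightarrow> int) \<Rightarrow> (nat \<Rightarrow> int) \<Rightarrow> int" where
  "pairing n c B = c 0 * B 0 + (\<Sum>i=1..n. c i * B i)"

lemma omega_eval_of_int: "omega_eval n (\<lambda>i. of_int (c i)) B = of_int (pairing n c B)"
  by (simp add: omega_eval_def pairing_def)

definition admissible_weight :: "nat \<Rightarrow> (nat \<Rightarrow> int) \<Rightarrow> bool" where
  "admissible_weight n c \<longleftrightarrow> c 0 \<ge> 2 * int n + 6 \<and> (\<forall>i\<in>{1..n}. 1 \<le> c i \<and> c i \<le> 2)
     \<and> (\<forall>i\<in>{1..<n}. c (Suc i) \<le> c i)"

lemma c1_nef_cone_admissible_weight:
  assumes "n \<ge> 1" and "admissible_weight n c"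
  shows "c1_nef_cone n (\<lambda>i. of_int (c i))"
proof -
  have c0: "(of_int (c 0)::real) \<ge> 2 * real n + 6"
    using assms(2) unfolding admissible_weight_def by linarith
  have c12: "\<And>i. i \<in> {1..n} \<Longrightarrow> 1 \<le> c i \<and> c i \<le> 2"
    and mono: "\<And>i. i \<in> {1..<n} \<Longrightarrow> c (Suc i) \<le> c i"
    using assms(2) unfolding admissible_weight_def by blast+
  have sum_le: "(\<Sum>i=1..n. (of_int (c i)::real)) \<le> real n * 2"
    using sum_bounded_above[of "{1..n}" "\<lambda>i. (of_int (c i)::real)" 2] c12 by simp
  have sum_sq_le: "(\<Sum>i=1..n. (of_int (c i)::real)^2) \<le> real n * 4"
  proof -
    have "(of_int (c i)::real)^2 \<le> 2^2" if "i \<in> {1..n}" for i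
      using c12[OF that] by (intro power_mono) auto
    then show ?thesis
      using sum_bounded_above[of "{1..n}" "\<lambda>i. (of_int (c i)::real)^2" 4] by simp
  qed
  have "real n * 4 < (2 * real n + 6)^2"
    by (simp add: power2_eq_square algebra_simps) (simp add: add_pos_nonneg)
  also have "\<dots> \<le> (of_int (c 0))^2"
    using c0 by (intro power_mono) auto
  finally have sum_sq_less: "(\<Sum>i=1..n. (of_int (c i)::real)^2) < (of_int (c 0))^2"
    using sum_sq_le by linarith
  have "reduced_cone n (\<lambda>i. of_int (c i))"
  proof -
    consider "n = 1" | "n = 2" | "n \<ge> 3" using assms(1) by linarith
    then show ?thesis
    proof cases
      case 1
      then show ?thesis using c12[of 1] c0 by (simp add: reduced_cone_def)
    next
      case 2
      then show ?thesis using mono[of 1] c12[of 1] c12[of 2] c0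
        by (simp add: reduced_cone_def eval_nat_numeral)
    next
      case 3
      then show ?thesis using c12[of 1] c12[of 2] c12[of 3] c12[of n] mono c0 sum_sq_less
        by (auto simp: reduced_cone_def)
    qed
  qed
  then show ?thesis using sum_le c0 by (simp add: c1_nef_cone_def)
qed

lemma coeff_lower_bound:
  assumes ind: "ind n B \<ge> 0" and pos: "B 0 > 0" and i: "i \<in> {1..n}"
  shows "B i \<ge> -(B 0 + 1)"
proof (rule ccontr)
  assume "\<not> ?thesis"
  then have low: "B 0 + 2 \<le> -B i" by linarith
  have "(B i)^2 - B i \<le> (\<Sum>j=1..n. (B j)^2 - B j)"
  proof (rule member_le_sum[OF i])
    show "0 \<le> (B j)^2 - B j" for j
    proof (cases "B j \<le> 0")
      case True
      then show ?thesis using zero_le_square[of "B j"] unfolding power2_eq_square by linarith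
    next
      case False
      then have "B j * 1 \<le> B j * B j" by (intro mult_left_mono) auto
      then show ?thesis by (simp add: power2_eq_square)
    qed
  qed simp
  also have "\<dots> \<le> (B 0)^2 + 3 * B 0"
    using ind by (simp add: ind_def self_int_def K0_dot_def sum_subtractf)
  finally have "(B i)^2 - B i \<le> (B 0)^2 + 3 * B 0" .
  moreover have "(B 0 + 2) * (B 0 + 2) \<le> (-B i) * (-B i)"
    using low pos by (intro mult_mono) auto
  ultimately show False
    using low pos by (simp add: power2_eq_square algebra_simps)
qed

lemma pairing_lower_bound:
  assumes "ind n B \<ge> 0" and pos: "B 0 > 0" and c: "admissible_weight n c"
  shows "pairing n c B \<ge> -2 * int n"
proof -
  have "c i * B i \<ge> -2 * (B 0 + 1)" if i: "i \<in> {1..n}" for i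
  proof -
    have "1 \<le> c i" "c i \<le> 2" using c i by (auto simp: admissible_weight_def)
    moreover have "B i \<ge> -(B 0 + 1)" using coeff_lower_bound[OF assms(1) pos i] .
    ultimately show ?thesis
    proof (cases "B i \<ge> 0")
      case False
      then have "2 * B i \<le> c i * B i" using \<open>c i \<le> 2\<close> by (intro mult_right_mono_neg) auto
      then show ?thesis using \<open>B i \<ge> -(B 0 + 1)\<close> by (simp add: algebra_simps)
    next
      case True
      then have "0 \<le> c i * B i" using \<open>1 \<le> c i\<close> by simp
      then show ?thesis using pos by (simp add: algebra_simps)
    qed
  qed
  then have "(\<Sum>i=1..n. c i * B i) \<ge> int n * (-2 * (B 0 + 1))"
    using sum_bounded_below[of "{1..n}" "-2 * (B 0 + 1)" "\<lambda>i. c i * B i"] by simp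
  moreover have "c 0 * B 0 \<ge> (2 * int n + 6) * B 0"
    using c pos by (intro mult_right_mono) (auto simp: admissible_weight_def)
  ultimately show ?thesis using pos unfolding pairing_def by (simp add: algebra_simps)
qed

lemma eventually_const_if_decreasing_bounded:
  fixes f :: "nat \<Rightarrow> int"
  assumes dec: "\<And>i. f (Suc i) \<le> f i" and bound: "\<And>i. b \<le> f i"
  shows "\<exists>v. eventually (\<lambda>i. f i = v) sequentially"
proof -
  define m where "m = (LEAST v. \<exists>i. nat (f i - b) = v)"
  have "\<exists>N. nat (f N - b) = m"
    unfolding m_def by (rule LeastI_ex) auto
  then obtain N where N: "nat (f N - b) = m" ..
  have "f i = f N" if "N \<le> i" for i
  proof -
    have "m \<le> nat (f i - b)" unfolding m_def by (rule Least_le) auto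
    moreover have "f i \<le> f N" using decseq_SucI[of f, OF dec] that by (simp add: decseq_def)
    ultimately show ?thesis using N bound[of i] bound[of N] by linarith
  qed
  then show ?thesis unfolding eventually_sequentially by blast
qed

lemma pairing_eventually_const:
  assumes "n \<ge> 1" and U5: "\<And>i. A i \<in> U5 n k"
    and chain: "\<And>i. class_ge n (A i) (A (Suc i))" and c: "admissible_weight n c"
  shows "\<exists>v. eventually (\<lambda>i. pairing n c (A i) = v) sequentially"
proof (rule eventually_const_if_decreasing_bounded)
  fix i
  have "omega_eval n (\<lambda>i. of_int (c i)) (A (Suc i)) \<le> omega_eval n (\<lambda>i. of_int (c i)) (A i)"
    using chain[of i] c1_nef_cone_admissible_weight[OF assms(1) c] unfolding class_ge_def by blast
  then show "pairing n c (A (Suc i)) \<le> pairing n c (A i)"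
    by (simp add: omega_eval_of_int)
  show "-2 * int n \<le> pairing n c (A i)"
    using U5[of i] by (intro pairing_lower_bound[OF _ _ c]) (auto simp: U5_def dot_H_def)
qed

definition test_weight :: "nat \<Rightarrow> nat \<Rightarrow> nat \<Rightarrow> int" where
  "test_weight n j i =
     (if i = 0 then 2 * int n + (if j = Suc n then 7 else 6)
      else if i \<le> j \<and> j \<le> n then 2 else 1)"

lemma admissible_test_weight: "admissible_weight n (test_weight n j)"
  by (auto simp: admissible_weight_def test_weight_def)

lemma pairing_test_weight_diff_0:
  "pairing n (test_weight n (Suc n)) B - pairing n (test_weight n 0) B = B 0"
  by (simp add: pairing_def test_weight_def algebra_simps)

lemma pairing_test_weight_diff:
  assumes j: "j \<in> {1..n}"
  shows "pairing n (test_weight n j) B - pairing n (test_weight n (j - 1)) B = B j"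
proof -
  have "pairing n (test_weight n j) B - pairing n (test_weight n (j - 1)) B
      = (\<Sum>i=1..n. (test_weight n j i - test_weight n (j - 1) i) * B i)"
    using j by (auto simp: pairing_def sum_subtractf algebra_simps test_weight_def)
  also have "\<dots> = (\<Sum>i=1..n. if i = j then B i else 0)"
    by (rule sum.cong) (use j in \<open>auto simp: test_weight_def\<close>)
  also have "\<dots> = B j" using j by simp
  finally show ?thesis .
qed

lemma class_eqI_test_weights:
  assumes "is_class n B" "is_class n C"
    and eq: "\<And>j. j \<le> Suc n \<Longrightarrow> pairing n (test_weight n j) B = pairing n (test_weight n j) C"
  shows "B = C"
proof
  fix j
  consider "j = 0" | "j \<in> {1..n}" | "j > n" by fastforce
  then show "B j = C j"
  proof cases
    case 1
    then show ?thesis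
      using eq[of 0] eq[of "Suc n"] pairing_test_weight_diff_0[of n B] pairing_test_weight_diff_0[of n C]
      by simp
  next
    case 2
    then show ?thesis
      using 2 eq[of j] eq[of "j - 1"] pairing_test_weight_diff[OF 2, of B] pairing_test_weight_diff[OF 2, of C]
      by auto
  next
    case 3
    then show ?thesis using assms(1,2) by (simp add: is_class_def)
  qed
qed

theorem lemma4p3:
  fixes n k :: nat and A :: "nat \<Rightarrow> (nat \<Rightarrow> int)"
  assumes "n \<ge> 1" and "k > 0"
    and "\<And>i. A i \<in> U5 n k"
    and "\<And>i. class_ge n (A i) (A (Suc i))"
  shows "\<exists>N. \<forall>i\<ge>N. A i = A N"
proof -
  obtain v where v: "\<And>j. eventually (\<lambda>i. pairing n (test_weight n j) (A i) = v j) sequentially"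
    using pairing_eventually_const[of n A k, OF assms(1,3,4) admissible_test_weight[of n]] by metis
  have "eventually (\<lambda>i. \<forall>j\<in>{..Suc n}. pairing n (test_weight n j) (A i) = v j) sequentially"
    using v by (intro eventually_ball_finite) auto
  then obtain N where N: "\<And>i j. i \<ge> N \<Longrightarrow> j \<le> Suc n \<Longrightarrow> pairing n (test_weight n j) (A i) = v j"
    unfolding eventually_sequentially by blast
  have "A i = A N" if "i \<ge> N" for i
    using assms(3)[of i] assms(3)[of N] N[OF that] N[of N]
    by (intro class_eqI_test_weights) (auto simp: U5_def)
  then show ?thesis by blast
qed

end
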